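(* Let $W=\partial_u+v^p\partial_v$ and, for a smooth function $\phi$ on the interior, let $\tilde K^W(\phi)=-\frac{2}{r}(v^p+1)\,\partial_v\phi\,\partial_u\phi$. Fix $u_{\text{✄}}$ in the range of $u_\gamma$. There exist constants $\delta_1=\delta_1(\epsilon)$ and $\delta_2=\delta_2(v_* )>0$, independent of $\phi$, with $\delta_1\to0$ as $\epsilon\to0$ and $\delta_2\to0$ as $v_*\to\infty$, such that for every smooth $\phi$, every $v_*\ge v_\gamma(u_{\text{✄}})$, every $\hat v>v_*$ and all $u_1<u_2$ with $u_{\text{✄}}\le u_1$ and $0<u_2-u_1\le\epsilon$, setting $\mathcal R_{V_1}=[u_1,u_2]\times[v_*,\hat v]\times\mathbb S^2$, $$\int_{\mathcal R_{V_1}}|\tilde K^W(\phi)|\,dVol\le\delta_1\sup_{u_1\le\bar u\le u_2}F^W_{u=\bar u}[v_*,\hat v]+\delta_2\sup_{v_*\le\bar v\le\hat v}F^W_{v=\bar v}[u_1,u_2].$$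
   Context: Fix $M>|e|>0$ and let $r_\pm=M\pm\sqrt{M^2-e^2}$. The black hole interior of the maximal globally hyperbolic development $(\mathcal M,g)$ of two-ended subextremal Reissner–Nordström data is covered by Eddington–Finkelstein double null coordinates $(u,v)\in\mathbb R^2$ together with spherical coordinates $(\theta,\vartheta)\in\mathbb S^2$ ($\vartheta$ the azimuthal angle), in which $g=-\Omega^2(u,v)\,du\,dv+r^2(u,v)(d\theta^2+\sin^2\theta\,d\vartheta^2)$, where $r\in(r_-,r_+)$, $\Omega^2=-(1-\frac{2M}{r}+\frac{e^2}{r^2})>0$, $\partial_u r=\partial_v r=-\Omega^2/2$, and $\frac{\partial_u\Omega}{\Omega}=\frac{\partial_v\Omega}{\Omega}=\frac{1}{2r^2}(M-\frac{e^2}{r})$. The function $r$ depends only on $r^*:=(u+v)/2$ and decreases from $r_+$ (as $r^*\to-\infty$) to $r_-$ (as $r^*\to+\infty$). For a function $\psi$, $|\nabla\!\!\!/\,\psi|^2=r^{-2}[(\partial_\theta\psi)^2+\sin^{-2}\theta(\partial_\vartheta\psi)^2]$ and $d\sigma$ is the standard measure on the unit sphere. Fix $p>1$. Fix $r_{blue}\in(r_-,r_+)$ so close to $r_-$ that $M-e^2/r<0$ for $r_-<r\le r_{blue}$ and $r^*_{blue}>0$, where $r^*_{blue}$ is the value of $r^*$ on $\{r=r_{blue}\}$; fix $\beta>0$ with $-\partial_u\Omega/\Omega=-\partial_v\Omega/\Omega\ge\beta$ on $\{r_-<r\le r_{blue}\}$. Fix $\alpha>\max\{1,(p+1)/\beta\}$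 with $\alpha(2-\log 2\alpha)>2r^*_{blue}+1$. Let $H(u,v)=u+v-\alpha\log v-2r^*_{blue}$ and $\gamma=\{H=0,\ v>2\alpha\}\times\mathbb S^2$; for $v>2\alpha$ let $u_\gamma(v)$ be the unique $u$ with $(u,v)\in\gamma$, and for $u$ in the range of $u_\gamma$ let $v_\gamma(u)$ be the corresponding $v$. For a vector field $X=X^u\partial_u+X^v\partial_v$ the null fluxes are $F^X_{u=\bar u}[v_1,v_2]=\int_{\mathbb S^2}\int_{v_1}^{v_2}\big[X^v(\partial_v\phi)^2+\frac{\Omega^2}{4}X^u|\nabla\!\!\!/\phi|^2\big](\bar u,v,\cdot)\,r^2\,dv\,d\sigma$ and $F^X_{v=\bar v}[u_1,u_2]=\int_{\mathbb S^2}\int_{u_1}^{u_2}\big[X^u(\partial_u\phi)^2+\frac{\Omega^2}{4}X^v|\nabla\!\!\!/\phi|^2\big](u,\bar v,\cdot)\,r^2\,du\,d\sigma$. The spacetime volume form is $dVol=\frac{r^2\Omega^2}{2}\,du\,dv\,d\sigma$. *)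

theory Defs
  imports "HOL-Analysis.Analysis"
begin

fun Ck :: "nat \<Rightarrow> ('a::euclidean_space \<Rightarrow> real) set" where
  "Ck 0 = {f. continuous_on UNIV f}"
| "Ck (Suc k) = {f. \<exists>f'. (\<forall>x. (f has_derivative f' x) (at x)) \<and>
                        (\<forall>i\<in>Basis. (\<lambda>x. f' x i) \<in> Ck k)}"

definition smooth_fun :: "('a::euclidean_space \<Rightarrow> real) \<Rightarrow> bool" where
  "smooth_fun f \<longleftrightarrow> (\<forall>k. f \<in> Ck k)"

definition rminus :: "real \<Rightarrow> real \<Rightarrow> real" where
  "rminus M e = M - sqrt (M^2 - e^2)"
definition rplus :: "real \<Rightarrow> real \<Rightarrow> real" where
  "rplus M e = M + sqrt (M^2 - e^2)"

definition Dfun :: "real \<Rightarrow> real \<Rightarrow> real \<Rightarrow> real" where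
  "Dfun M e \<rho> = 1 - 2*M/\<rho> + e^2/\<rho>^2"

definition Om2 :: "real \<Rightarrow> real \<Rightarrow> real \<Rightarrow> real" where
  "Om2 M e \<rho> = - Dfun M e \<rho>"

text \<open>The area radius r(u,v) = R(r*), r* = (u+v)/2, where R is the profile of r.\<close>
definition rr :: "(real \<Rightarrow> real) \<Rightarrow> real \<Rightarrow> real \<Rightarrow> real" where
  "rr R u v = R ((u+v)/2)"

definition rstar_of :: "(real \<Rightarrow> real) \<Rightarrow> real \<Rightarrow> real" where
  "rstar_of R \<rho> = (THE s. R s = \<rho>)"

definition u_gamma :: "real \<Rightarrow> real \<Rightarrow> real \<Rightarrow> real" where
  "u_gamma \<alpha> rsb v = \<alpha> * ln v + 2*rsb - v"

definition v_gamma :: "real \<Rightarrow> real \<Rightarrow> real \<Rightarrow> real" where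
  "v_gamma \<alpha> rsb u = (THE v. 2*\<alpha> < v \<and> u_gamma \<alpha> rsb v = u)"

text \<open>A smooth function phi on R^2 x S^2 is given as (the restriction of) a smooth
  function Phi on R^2 x R^3; its expression in (u,v,theta,vartheta).\<close>
definition sph :: "((real \<times> real \<times> real \<times> real \<times> real) \<Rightarrow> real)
    \<Rightarrow> real \<Rightarrow> real \<Rightarrow> real \<Rightarrow> real \<Rightarrow> real" where
  "sph \<Phi> u v \<theta> \<phi> = \<Phi> (u, v, sin \<theta> * cos \<phi>, sin \<theta> * sin \<phi>, cos \<theta>)"

definition pu :: "(real \<Rightarrow> real \<Rightarrow> real \<Rightarrow> real \<Rightarrow> real) \<Rightarrow> real \<Rightarrow> real \<Rightarrow> real \<Rightarrow> real \<Rightarrow> real" where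
  "pu \<psi> u v \<theta> \<phi> = deriv (\<lambda>x. \<psi> x v \<theta> \<phi>) u"
definition pv :: "(real \<Rightarrow> real \<Rightarrow> real \<Rightarrow> real \<Rightarrow> real) \<Rightarrow> real \<Rightarrow> real \<Rightarrow> real \<Rightarrow> real \<Rightarrow> real" where
  "pv \<psi> u v \<theta> \<phi> = deriv (\<lambda>x. \<psi> u x \<theta> \<phi>) v"
definition ptheta :: "(real \<Rightarrow> real \<Rightarrow> real \<Rightarrow> real \<Rightarrow> real) \<Rightarrow> real \<Rightarrow> real \<Rightarrow> real \<Rightarrow> real \<Rightarrow> real" where
  "ptheta \<psi> u v \<theta> \<phi> = deriv (\<lambda>x. \<psi> u v x \<phi>) \<theta>"
definition pvartheta :: "(real \<Rightarrow> real \<Rightarrow> real \<Rightarrow> real \<Rightarrow> real) \<Rightarrow> real \<Rightarrow> real \<Rightarrow> real \<Rightarrow> real \<Rightarrow> real" where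
  "pvartheta \<psi> u v \<theta> \<phi> = deriv (\<lambda>x. \<psi> u v \<theta> x) \<phi>"

definition angsq :: "(real \<Rightarrow> real) \<Rightarrow> (real \<Rightarrow> real \<Rightarrow> real \<Rightarrow> real \<Rightarrow> real) \<Rightarrow> real \<Rightarrow> real \<Rightarrow> real \<Rightarrow> real \<Rightarrow> real" where
  "angsq R \<psi> u v \<theta> \<phi> =
     (1 / (rr R u v)^2) * ((ptheta \<psi> u v \<theta> \<phi>)^2 + (pvartheta \<psi> u v \<theta> \<phi>)^2 / (sin \<theta>)^2)"

definition sph_int :: "(real \<Rightarrow> real \<Rightarrow> real) \<Rightarrow> real" where
  "sph_int f = integral {0..pi} (\<lambda>\<theta>. integral {0..2*pi} (\<lambda>\<phi>. f \<theta> \<phi> * sin \<theta>))"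

text \<open>Null fluxes of a vector field X = Xu d_u + Xv d_v.\<close>
definition flux_u :: "real \<Rightarrow> real \<Rightarrow> (real \<Rightarrow> real) \<Rightarrow> (real \<Rightarrow> real \<Rightarrow> real) \<Rightarrow> (real \<Rightarrow> real \<Rightarrow> real)
    \<Rightarrow> (real \<Rightarrow> real \<Rightarrow> real \<Rightarrow> real \<Rightarrow> real) \<Rightarrow> real \<Rightarrow> real \<Rightarrow> real \<Rightarrow> real" where
  "flux_u M e R Xu Xv \<psi> ub v1 v2 =
     sph_int (\<lambda>\<theta> \<phi>. integral {v1..v2} (\<lambda>v.
        (Xv ub v * (pv \<psi> ub v \<theta> \<phi>)^2
          + Om2 M e (rr R ub v) / 4 * Xu ub v * angsq R \<psi> ub v \<theta> \<phi>) * (rr R ub v)^2))"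

definition flux_v :: "real \<Rightarrow> real \<Rightarrow> (real \<Rightarrow> real) \<Rightarrow> (real \<Rightarrow> real \<Rightarrow> real) \<Rightarrow> (real \<Rightarrow> real \<Rightarrow> real)
    \<Rightarrow> (real \<Rightarrow> real \<Rightarrow> real \<Rightarrow> real \<Rightarrow> real) \<Rightarrow> real \<Rightarrow> real \<Rightarrow> real \<Rightarrow> real" where
  "flux_v M e R Xu Xv \<psi> vb u1 u2 =
     sph_int (\<lambda>\<theta> \<phi>. integral {u1..u2} (\<lambda>u.
        (Xu u vb * (pu \<psi> u vb \<theta> \<phi>)^2
          + Om2 M e (rr R u vb) / 4 * Xv u vb * angsq R \<psi> u vb \<theta> \<phi>) * (rr R u vb)^2))"

definition vol_int :: "real \<Rightarrow> real \<Rightarrow> (real \<Rightarrow> real) \<Rightarrow> (real \<Rightarrow> real \<Rightarrow> real \<Rightarrow> real \<Rightarrow> real)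
    \<Rightarrow> real \<Rightarrow> real \<Rightarrow> real \<Rightarrow> real \<Rightarrow> real" where
  "vol_int M e R f u1 u2 v1 v2 =
     sph_int (\<lambda>\<theta> \<phi>. integral {u1..u2} (\<lambda>u. integral {v1..v2} (\<lambda>v.
        f u v \<theta> \<phi> * (rr R u v)^2 * Om2 M e (rr R u v) / 2)))"

definition W_u :: "real \<Rightarrow> real \<Rightarrow> real" where "W_u u v = 1"
definition W_v :: "real \<Rightarrow> real \<Rightarrow> real \<Rightarrow> real" where "W_v p u v = v powr p"

definition KtildeW :: "(real \<Rightarrow> real) \<Rightarrow> real \<Rightarrow> (real \<Rightarrow> real \<Rightarrow> real \<Rightarrow> real \<Rightarrow> real)
    \<Rightarrow> real \<Rightarrow> real \<Rightarrow> real \<Rightarrow> real \<Rightarrow> real" where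
  "KtildeW R p \<psi> u v \<theta> \<phi> =
     - (2 / rr R u v) * (v powr p + 1) * pv \<psi> u v \<theta> \<phi> * pu \<psi> u v \<theta> \<phi>"

end

theory Submission
  imports Defs "HOL-Real_Asymp.Real_Asymp"
begin

(*
  Pointwise, |K~^W(phi)| dVol = r Omega^2 (v^p + 1) |d_v phi| |d_u phi| r^2 du dv dsigma, and since
  v^p >= 1 the AM--GM inequality bounds this by (Omega^2/r_-) (v^p (d_v phi)^2 + v^p (d_u phi)^2) r^2.
  In the region u >= u_wedge, v >= v_gamma(u_wedge) we have r^* >= r^*_blue, where
  Omega^2 <= Omega^2(r_blue) exp(-4 beta (r^* - r^*_blue)); this gives both Omega^2 <= Omega^2(r_blue)
  and Omega^2 <= K exp(-2 beta v).  The first term is then integrated in u over an interval of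
  length <= epsilon against the fluxes through u = const, the second in v against the weight
  v^p exp(-2 beta v), whose tail integral from v_star is <= v_star^p exp(-2 beta v_star)/beta -> 0.
*)


section \<open>Integrals over boxes times the sphere\<close>

definition sphere_chart :: "(real \<times> real) set" where
  "sphere_chart = {0..pi} \<times> {0..2 * pi}"

abbreviation (input) cont_box ::
    "real set \<Rightarrow> real set \<Rightarrow> (real \<Rightarrow> real \<Rightarrow> real \<Rightarrow> real \<Rightarrow> real) \<Rightarrow> bool" where
  "cont_box A B f \<equiv> continuous_on (A \<times> B \<times> sphere_chart) (\<lambda>(x,y,t,s). f x y t s)"

definition box_int :: "real \<Rightarrow> real \<Rightarrow> real \<Rightarrow> real \<Rightarrow> (real \<Rightarrow> real \<Rightarrow> real \<Rightarrow> real \<Rightarrow> real) \<Rightarrow> real" where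
  "box_int a b c d f = sph_int (\<lambda>t s. integral {a..b} (\<lambda>x. integral {c..d} (\<lambda>y. f x y t s)))"

text \<open>cont_box stated with projections, the form in which continuous_intros applies.\<close>
lemma cont_boxI:
  assumes "continuous_on (A \<times> B \<times> sphere_chart)
      (\<lambda>z. f (fst z) (fst (snd z)) (fst (snd (snd z))) (snd (snd (snd z))))"
  shows "cont_box A B f"
  using assms by (simp add: case_prod_beta)

lemma continuous_on_integral_second:
  fixes f :: "real \<Rightarrow> real \<Rightarrow> real \<Rightarrow> real \<Rightarrow> real"
  assumes "continuous_on (A \<times> {c..d} \<times> T) (\<lambda>(x,y,t,s). f x y t s)"
  shows "continuous_on (A \<times> T) (\<lambda>(x,t,s). integral {c..d} (\<lambda>y. f x y t s))"
proof -
  have "continuous_on ((A \<times> T) \<times> cbox c d)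
      (\<lambda>w. (\<lambda>(x,y,t,s). f x y t s) (fst (fst w), snd w, fst (snd (fst w)), snd (snd (fst w))))"
    by (rule continuous_on_compose2[OF assms]) (auto intro!: continuous_intros)
  then have "continuous_on ((A \<times> T) \<times> cbox c d) (\<lambda>(z,y). f (fst z) y (fst (snd z)) (snd (snd z)))"
    by (simp add: case_prod_beta)
  from integral_continuous_on_param[OF this] show ?thesis by (simp add: case_prod_beta)
qed

lemma continuous_on_integral_first:
  fixes g :: "real \<Rightarrow> real \<Rightarrow> real \<Rightarrow> real"
  assumes "continuous_on ({a..b} \<times> T) (\<lambda>(x,t,s). g x t s)"
  shows "continuous_on T (\<lambda>(t,s). integral {a..b} (\<lambda>x. g x t s))"
proof -
  have "continuous_on (T \<times> cbox a b) (\<lambda>w. (\<lambda>(x,t,s). g x t s) (snd w, fst (fst w), snd (fst w)))"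
    by (rule continuous_on_compose2[OF assms]) (auto intro!: continuous_intros)
  then have "continuous_on (T \<times> cbox a b) (\<lambda>(z,x). g x (fst z) (snd z))"
    by (simp add: case_prod_beta)
  from integral_continuous_on_param[OF this] show ?thesis by (simp add: case_prod_beta)
qed

lemma continuous_on_chart_slice:
  assumes "continuous_on sphere_chart (\<lambda>(t,s). g t s)" "t \<in> {0..pi}"
  shows "continuous_on {0..2 * pi} (\<lambda>s. g t s)"
proof -
  have "continuous_on {0..2 * pi} (\<lambda>s. (\<lambda>(t,s). g t s) (t, s))"
    by (rule continuous_on_compose2[OF assms(1)])
       (use assms(2) in \<open>auto simp: sphere_chart_def intro!: continuous_intros\<close>)
  then show ?thesis by simp
qed

lemma continuous_on_sph_inner:
  fixes A :: "'a::metric_space set" and g :: "'a \<Rightarrow> real \<Rightarrow> real \<Rightarrow> real"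
  assumes "continuous_on (A \<times> sphere_chart) (\<lambda>(x,t,s). g x t s)"
  shows "continuous_on (A \<times> {0..pi}) (\<lambda>(x,t). integral {0..2 * pi} (\<lambda>s. g x t s * sin t))"
proof -
  have "continuous_on ((A \<times> {0..pi}) \<times> cbox 0 (2 * pi))
      (\<lambda>w. (\<lambda>(x,t,s). g x t s) (fst (fst w), snd (fst w), snd w) * sin (snd (fst w)))"
    by (intro continuous_intros continuous_on_compose2[OF assms])
       (auto simp: sphere_chart_def intro!: continuous_intros)
  then have "continuous_on ((A \<times> {0..pi}) \<times> cbox 0 (2 * pi)) (\<lambda>(z,s). g (fst z) (snd z) s * sin (snd z))"
    by (simp add: case_prod_beta)
  from integral_continuous_on_param[OF this] show ?thesis by (simp add: case_prod_beta)
qed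

lemma continuous_on_sph_int_param:
  fixes A :: "'a::metric_space set" and g :: "'a \<Rightarrow> real \<Rightarrow> real \<Rightarrow> real"
  assumes "continuous_on (A \<times> sphere_chart) (\<lambda>(x,t,s). g x t s)"
  shows "continuous_on A (\<lambda>x. sph_int (g x))"
  unfolding sph_int_def
  using integral_continuous_on_param[of A 0 pi "\<lambda>x t. integral {0..2 * pi} (\<lambda>s. g x t s * sin t)"]
    continuous_on_sph_inner[OF assms]
  by simp

lemma integrable_sph_inner:
  assumes "continuous_on sphere_chart (\<lambda>(t,s). g t s)"
  shows "(\<lambda>t. integral {0..2 * pi} (\<lambda>s. g t s * sin t)) integrable_on {0..pi}"
proof -
  have "continuous_on ({0..pi} \<times> {0..2 * pi}) (\<lambda>(t,s). g t s * sin t)"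
    using assms unfolding sphere_chart_def by (auto simp: case_prod_beta intro!: continuous_intros)
  then have "continuous_on {0..pi} (\<lambda>t. integral {0..2 * pi} (\<lambda>s. g t s * sin t))"
    using integral_continuous_on_param[of "{0..pi}" 0 "2 * pi" "\<lambda>t s. g t s * sin t"] by simp
  then show ?thesis by (rule integrable_continuous_interval)
qed

lemma sph_int_mono:
  assumes c1: "continuous_on sphere_chart (\<lambda>(t,s). g1 t s)"
    and c2: "continuous_on sphere_chart (\<lambda>(t,s). g2 t s)"
    and le: "\<And>t s. (t, s) \<in> sphere_chart \<Longrightarrow> g1 t s \<le> g2 t s"
  shows "sph_int g1 \<le> sph_int g2"
  unfolding sph_int_def
proof (rule integral_le[OF integrable_sph_inner[OF c1] integrable_sph_inner[OF c2]])
  fix t assume t: "t \<in> {0..pi}"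
  have "0 \<le> sin t" using t by (auto intro!: sin_ge_zero)
  then show "integral {0..2 * pi} (\<lambda>s. g1 t s * sin t) \<le> integral {0..2 * pi} (\<lambda>s. g2 t s * sin t)"
    using continuous_on_chart_slice[OF c1 t] continuous_on_chart_slice[OF c2 t] le t
    by (intro integral_le integrable_continuous_interval continuous_intros)
       (auto simp: sphere_chart_def mult_right_mono)
qed

lemma sph_int_linear:
  assumes c1: "continuous_on sphere_chart (\<lambda>(t,s). f t s)"
    and c2: "continuous_on sphere_chart (\<lambda>(t,s). g t s)"
  shows "sph_int (\<lambda>t s. k1 * f t s + k2 * g t s) = k1 * sph_int f + k2 * sph_int g"
proof -
  have inner: "integral {0..2 * pi} (\<lambda>s. (k1 * f t s + k2 * g t s) * sin t)
      = k1 * integral {0..2 * pi} (\<lambda>s. f t s * sin t) + k2 * integral {0..2 * pi} (\<lambda>s. g t s * sin t)"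
    if t: "t \<in> {0..pi}" for t
  proof -
    have "(\<lambda>s. f t s * sin t) integrable_on {0..2 * pi}" "(\<lambda>s. g t s * sin t) integrable_on {0..2 * pi}"
      using continuous_on_chart_slice[OF c1 t] continuous_on_chart_slice[OF c2 t]
      by (auto intro!: integrable_continuous_interval continuous_intros)
    from integral_add[OF integrable_on_cmult_left[OF this(1)] integrable_on_cmult_left[OF this(2)]]
    show ?thesis by (simp add: algebra_simps)
  qed
  have "sph_int (\<lambda>t s. k1 * f t s + k2 * g t s)
      = integral {0..pi} (\<lambda>t. k1 * integral {0..2 * pi} (\<lambda>s. f t s * sin t)
                             + k2 * integral {0..2 * pi} (\<lambda>s. g t s * sin t))"
    unfolding sph_int_def by (rule integral_cong) (use inner in auto)
  also have "\<dots> = k1 * sph_int f + k2 * sph_int g"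
    unfolding sph_int_def
    using integral_add[OF integrable_on_cmult_left[OF integrable_sph_inner[OF c1]]
                          integrable_on_cmult_left[OF integrable_sph_inner[OF c2]]]
    by simp
  finally show ?thesis .
qed

lemma sph_int_cmult: "sph_int (\<lambda>t s. c * g t s) = c * sph_int g"
  unfolding sph_int_def by (simp add: mult.assoc)

text \<open>sph_int of an integral only sees the integrand multiplied by sin theta, so the integrand may
  be changed freely at the poles.\<close>
lemma sph_int_integral_cong_sin:
  assumes "\<And>t s y. g t s y * sin t = h t s y * sin t"
  shows "sph_int (\<lambda>t s. integral I (g t s)) = sph_int (\<lambda>t s. integral I (h t s))"
proof -
  have "integral I (g t s) * sin t = integral I (h t s) * sin t" for t s
  proof -
    have "integral I (g t s) * sin t = integral I (\<lambda>y. g t s y * sin t)" by simp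
    also have "\<dots> = integral I (\<lambda>y. h t s y * sin t)" by (simp only: assms)
    also have "\<dots> = integral I (h t s) * sin t" by simp
    finally show ?thesis .
  qed
  then show ?thesis unfolding sph_int_def by (simp only:)
qed

lemma integral_swap_interval:
  fixes f :: "real \<Rightarrow> real \<Rightarrow> real"
  assumes "continuous_on ({a..b} \<times> {c..d}) (\<lambda>(x,y). f x y)"
  shows "integral {a..b} (\<lambda>x. integral {c..d} (f x)) = integral {c..d} (\<lambda>y. integral {a..b} (\<lambda>x. f x y))"
  using integral_swap_continuous[of a c b d f] assms by (simp add: cbox_Pair_eq)

lemma sph_int_integral_swap:
  fixes g :: "real \<Rightarrow> real \<Rightarrow> real \<Rightarrow> real"
  assumes cg: "continuous_on ({a..b} \<times> sphere_chart) (\<lambda>(x,t,s). g x t s)"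
  shows "sph_int (\<lambda>t s. integral {a..b} (\<lambda>x. g x t s)) = integral {a..b} (\<lambda>x. sph_int (g x))"
proof -
  have inner: "integral {0..2 * pi} (\<lambda>s. integral {a..b} (\<lambda>x. g x t s) * sin t)
      = integral {a..b} (\<lambda>x. integral {0..2 * pi} (\<lambda>s. g x t s * sin t))" if t: "t \<in> {0..pi}" for t
  proof -
    have "continuous_on ({0..2 * pi} \<times> {a..b}) (\<lambda>w. (\<lambda>(x,t,s). g x t s) (snd w, t, fst w) * sin t)"
      by (intro continuous_intros continuous_on_compose2[OF cg])
         (use t in \<open>auto simp: sphere_chart_def intro!: continuous_intros\<close>)
    then have "continuous_on ({0..2 * pi} \<times> {a..b}) (\<lambda>(s, x). g x t s * sin t)"
      by (simp add: case_prod_beta)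
    from integral_swap_interval[OF this] show ?thesis by simp
  qed
  have cont: "continuous_on ({0..pi} \<times> {a..b}) (\<lambda>(t,x). integral {0..2 * pi} (\<lambda>s. g x t s * sin t))"
  proof -
    have "continuous_on ({0..pi} \<times> {a..b})
        (\<lambda>w. (\<lambda>(x,t). integral {0..2 * pi} (\<lambda>s. g x t s * sin t)) (snd w, fst w))"
      by (rule continuous_on_compose2[OF continuous_on_sph_inner[OF cg]]) (auto intro!: continuous_intros)
    then show ?thesis by (simp add: case_prod_beta)
  qed
  have "sph_int (\<lambda>t s. integral {a..b} (\<lambda>x. g x t s))
      = integral {0..pi} (\<lambda>t. integral {a..b} (\<lambda>x. integral {0..2 * pi} (\<lambda>s. g x t s * sin t)))"
    unfolding sph_int_def by (rule integral_cong) (use inner in auto)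
  also have "\<dots> = integral {a..b} (\<lambda>x. integral {0..pi} (\<lambda>t. integral {0..2 * pi} (\<lambda>s. g x t s * sin t)))"
    by (rule integral_swap_interval[OF cont])
  also have "\<dots> = integral {a..b} (\<lambda>x. sph_int (g x))"
    unfolding sph_int_def ..
  finally show ?thesis .
qed

lemma sph_int_cong:
  assumes "\<And>t s. (t, s) \<in> sphere_chart \<Longrightarrow> g t s = h t s"
  shows "sph_int g = sph_int h"
  unfolding sph_int_def by (intro integral_cong) (simp add: assms sphere_chart_def)

lemma integral_linear_comb:
  fixes f g :: "real \<Rightarrow> real"
  assumes "f integrable_on I" "g integrable_on I"
  shows "integral I (\<lambda>x. k1 * f x + k2 * g x) = k1 * integral I f + k2 * integral I g"
  using integral_add[OF integrable_on_cmult_left[OF assms(1)] integrable_on_cmult_left[OF assms(2)]]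
  by simp

lemma cont_box_slice:
  assumes "cont_box A B f" "x \<in> A"
  shows "continuous_on (B \<times> sphere_chart) (\<lambda>(y,t,s). f x y t s)"
proof -
  have "continuous_on (B \<times> sphere_chart)
      (\<lambda>w. (\<lambda>(x,y,t,s). f x y t s) (x, fst w, fst (snd w), snd (snd w)))"
    by (rule continuous_on_compose2[OF assms(1)]) (use assms(2) in \<open>auto intro!: continuous_intros\<close>)
  then show ?thesis by (simp add: case_prod_beta)
qed

lemma cont_box_at_chart_point:
  assumes "cont_box A B f" "(t, s) \<in> sphere_chart"
  shows "continuous_on (A \<times> B) (\<lambda>(x,y). f x y t s)"
proof -
  have "continuous_on (A \<times> B) (\<lambda>w. (\<lambda>(x,y,t,s). f x y t s) (fst w, snd w, t, s))"
    by (rule continuous_on_compose2[OF assms(1)]) (use assms(2) in \<open>auto intro!: continuous_intros\<close>)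
  then show ?thesis by (simp add: case_prod_beta)
qed

lemma cont_box_transpose:
  assumes "cont_box A B f"
  shows "cont_box B A (\<lambda>y x t s. f x y t s)"
proof -
  have "continuous_on (B \<times> A \<times> sphere_chart)
      (\<lambda>w. (\<lambda>(x,y,t,s). f x y t s) (fst (snd w), fst w, fst (snd (snd w)), snd (snd (snd w))))"
    by (rule continuous_on_compose2[OF assms]) (auto intro!: continuous_intros)
  then show ?thesis by (simp add: case_prod_beta)
qed

lemma integrable_at_chart_point:
  fixes g :: "real \<Rightarrow> real \<Rightarrow> real \<Rightarrow> real"
  assumes "continuous_on ({a..b} \<times> sphere_chart) (\<lambda>(x,t,s). g x t s)" "(t, s) \<in> sphere_chart"
  shows "(\<lambda>x. g x t s) integrable_on {a..b}"
proof -
  have "continuous_on {a..b} (\<lambda>x. (\<lambda>(x,t,s). g x t s) (x, t, s))"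
    by (rule continuous_on_compose2[OF assms(1)]) (use assms(2) in \<open>auto intro!: continuous_intros\<close>)
  then show ?thesis by (simp add: integrable_continuous_interval)
qed

lemma sph_int_integral_mono:
  fixes f g :: "real \<Rightarrow> real \<Rightarrow> real \<Rightarrow> real"
  assumes cf: "continuous_on ({a..b} \<times> sphere_chart) (\<lambda>(x,t,s). f x t s)"
    and cg: "continuous_on ({a..b} \<times> sphere_chart) (\<lambda>(x,t,s). g x t s)"
    and le: "\<And>x t s. x \<in> {a..b} \<Longrightarrow> (t, s) \<in> sphere_chart \<Longrightarrow> f x t s \<le> g x t s"
  shows "sph_int (\<lambda>t s. integral {a..b} (\<lambda>x. f x t s)) \<le> sph_int (\<lambda>t s. integral {a..b} (\<lambda>x. g x t s))"
  using integrable_at_chart_point[OF cf] integrable_at_chart_point[OF cg] le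
  by (intro sph_int_mono[OF continuous_on_integral_first[OF cf] continuous_on_integral_first[OF cg]]
      integral_le) auto

lemma box_int_mono:
  assumes cf: "cont_box {a..b} {c..d} f" and cg: "cont_box {a..b} {c..d} g"
    and le: "\<And>x y t s. x \<in> {a..b} \<Longrightarrow> y \<in> {c..d} \<Longrightarrow> (t, s) \<in> sphere_chart \<Longrightarrow> f x y t s \<le> g x y t s"
  shows "box_int a b c d f \<le> box_int a b c d g"
  unfolding box_int_def
proof (rule sph_int_integral_mono[OF continuous_on_integral_second[OF cf] continuous_on_integral_second[OF cg]])
  fix x t s assume x: "x \<in> {a..b}" and ts: "(t, s) \<in> sphere_chart"
  show "integral {c..d} (\<lambda>y. f x y t s) \<le> integral {c..d} (\<lambda>y. g x y t s)"
    using integrable_at_chart_point[OF cont_box_slice[OF cf x] ts]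
      integrable_at_chart_point[OF cont_box_slice[OF cg x] ts] le[OF x _ ts]
    by (intro integral_le) auto
qed

lemma box_int_linear:
  assumes cf: "cont_box {a..b} {c..d} f" and cg: "cont_box {a..b} {c..d} g"
  shows "box_int a b c d (\<lambda>x y t s. k1 * f x y t s + k2 * g x y t s)
       = k1 * box_int a b c d f + k2 * box_int a b c d g"
proof -
  note cf' = continuous_on_integral_second[OF cf] and cg' = continuous_on_integral_second[OF cg]
  have inner: "integral {a..b} (\<lambda>x. integral {c..d} (\<lambda>y. k1 * f x y t s + k2 * g x y t s))
      = k1 * integral {a..b} (\<lambda>x. integral {c..d} (\<lambda>y. f x y t s))
      + k2 * integral {a..b} (\<lambda>x. integral {c..d} (\<lambda>y. g x y t s))"
    if ts: "(t, s) \<in> sphere_chart" for t s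
  proof -
    have "integral {c..d} (\<lambda>y. k1 * f x y t s + k2 * g x y t s)
        = k1 * integral {c..d} (\<lambda>y. f x y t s) + k2 * integral {c..d} (\<lambda>y. g x y t s)"
      if x: "x \<in> {a..b}" for x
      by (rule integral_linear_comb[OF integrable_at_chart_point[OF cont_box_slice[OF cf x] ts]
                                      integrable_at_chart_point[OF cont_box_slice[OF cg x] ts]])
    then have "integral {a..b} (\<lambda>x. integral {c..d} (\<lambda>y. k1 * f x y t s + k2 * g x y t s))
        = integral {a..b} (\<lambda>x. k1 * integral {c..d} (\<lambda>y. f x y t s) + k2 * integral {c..d} (\<lambda>y. g x y t s))"
      by (intro integral_cong) auto
    also have "\<dots> = k1 * integral {a..b} (\<lambda>x. integral {c..d} (\<lambda>y. f x y t s))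
        + k2 * integral {a..b} (\<lambda>x. integral {c..d} (\<lambda>y. g x y t s))"
      by (rule integral_linear_comb[OF integrable_at_chart_point[OF cf' ts] integrable_at_chart_point[OF cg' ts]])
    finally show ?thesis .
  qed
  show ?thesis
    unfolding box_int_def
    by (simp add: sph_int_cong[OF inner] sph_int_linear continuous_on_integral_first[OF cf']
                  continuous_on_integral_first[OF cg'])
qed

lemma box_int_first:
  assumes "cont_box {a..b} {c..d} f"
  shows "box_int a b c d f = integral {a..b} (\<lambda>x. sph_int (\<lambda>t s. integral {c..d} (\<lambda>y. f x y t s)))"
  unfolding box_int_def by (rule sph_int_integral_swap[OF continuous_on_integral_second[OF assms]])

lemma box_int_transpose:
  assumes "cont_box {a..b} {c..d} f"
  shows "box_int a b c d f = box_int c d a b (\<lambda>y x. f x y)"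
  unfolding box_int_def
  by (rule sph_int_cong) (simp add: integral_swap_interval[OF cont_box_at_chart_point[OF assms]])

lemma box_integral_split:
  fixes K A B :: "real \<Rightarrow> real \<Rightarrow> real \<Rightarrow> real \<Rightarrow> real" and w :: "real \<Rightarrow> real"
  assumes cK: "cont_box {a..b} {c..d} K" and cA: "cont_box {a..b} {c..d} A"
    and cB: "cont_box {a..b} {c..d} B"
    and cw: "continuous_on {c..d} w" and w_nonneg: "\<And>y. y \<in> {c..d} \<Longrightarrow> 0 \<le> w y"
    and "a \<le> b" "0 \<le> c1" "0 \<le> c2"
    and split: "\<And>x y t s. x \<in> {a..b} \<Longrightarrow> y \<in> {c..d} \<Longrightarrow> (t, s) \<in> sphere_chart \<Longrightarrow>
        K x y t s \<le> c1 * A x y t s + c2 * (w y * B x y t s)"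
    and SA: "\<And>x. x \<in> {a..b} \<Longrightarrow> sph_int (\<lambda>t s. integral {c..d} (\<lambda>y. A x y t s)) \<le> SA"
    and SB: "\<And>y. y \<in> {c..d} \<Longrightarrow> sph_int (\<lambda>t s. integral {a..b} (\<lambda>x. B x y t s)) \<le> SB"
  shows "box_int a b c d K \<le> c1 * ((b - a) * SA) + c2 * (integral {c..d} w * SB)"
proof -
  have cwB: "cont_box {a..b} {c..d} (\<lambda>x y t s. w y * B x y t s)"
  proof -
    have "continuous_on ({a..b} \<times> {c..d} \<times> sphere_chart)
        (\<lambda>z. w (fst (snd z)) * (\<lambda>(x,y,t,s). B x y t s) z)"
      by (intro continuous_intros continuous_on_compose2[OF cw] cB) auto
    then show ?thesis by (simp add: case_prod_beta)
  qed
  have cAB: "cont_box {a..b} {c..d} (\<lambda>x y t s. c1 * A x y t s + c2 * (w y * B x y t s))"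
  proof -
    have "continuous_on ({a..b} \<times> {c..d} \<times> sphere_chart)
        (\<lambda>z. c1 * (\<lambda>(x,y,t,s). A x y t s) z + c2 * (\<lambda>(x,y,t,s). w y * B x y t s) z)"
      by (intro continuous_intros cA cwB)
    then show ?thesis by (simp add: case_prod_beta)
  qed
  have A_part: "box_int a b c d A \<le> (b - a) * SA"
  proof -
    have "box_int a b c d A \<le> integral {a..b} (\<lambda>x. SA)"
      unfolding box_int_first[OF cA]
      by (intro integral_le integrable_continuous_interval
          continuous_on_sph_int_param[OF continuous_on_integral_second[OF cA]]) (auto intro: SA)
    then show ?thesis using \<open>a \<le> b\<close> by simp
  qed
  have B_part: "box_int a b c d (\<lambda>x y t s. w y * B x y t s) \<le> integral {c..d} w * SB"
  proof -
    note cB' = continuous_on_integral_second[OF cont_box_transpose[OF cB]]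
    have "box_int a b c d (\<lambda>x y t s. w y * B x y t s)
        = integral {c..d} (\<lambda>y. w y * sph_int (\<lambda>t s. integral {a..b} (\<lambda>x. B x y t s)))"
      unfolding box_int_transpose[OF cwB] box_int_first[OF cont_box_transpose[OF cwB]]
      by (simp add: sph_int_cmult)
    also have "\<dots> \<le> integral {c..d} (\<lambda>y. w y * SB)"
      using SB w_nonneg
      by (intro integral_le integrable_continuous_interval continuous_intros cw
          continuous_on_sph_int_param[OF cB']) (auto intro: mult_left_mono)
    also have "\<dots> = integral {c..d} w * SB" by simp
    finally show ?thesis .
  qed
  have "box_int a b c d K \<le> box_int a b c d (\<lambda>x y t s. c1 * A x y t s + c2 * (w y * B x y t s))"
    by (rule box_int_mono[OF cK cAB split])
  also have "\<dots> = c1 * box_int a b c d A + c2 * box_int a b c d (\<lambda>x y t s. w y * B x y t s)"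
    by (rule box_int_linear[OF cA cwB])
  also have "\<dots> \<le> c1 * ((b - a) * SA) + c2 * (integral {c..d} w * SB)"
    using A_part B_part \<open>0 \<le> c1\<close> \<open>0 \<le> c2\<close> by (intro add_mono mult_left_mono)
  finally show ?thesis .
qed


section \<open>Smooth functions in spherical coordinates\<close>

text \<open>Regularity of a function psi(u,v,theta,vartheta) written in the polar chart, as needed for the
  energy fluxes: continuous coordinate derivatives, and an azimuthal derivative that vanishes like
  sin theta at the poles (so that |slashed-nabla psi|^2 sin theta stays continuous).\<close>
definition polar_C1 :: "(real \<Rightarrow> real \<Rightarrow> real \<Rightarrow> real \<Rightarrow> real) \<Rightarrow> bool" where
  "polar_C1 \<psi> \<longleftrightarrow>
     continuous_on UNIV (\<lambda>(u,v,t,s). pu \<psi> u v t s) \<and>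
     continuous_on UNIV (\<lambda>(u,v,t,s). pv \<psi> u v t s) \<and>
     continuous_on UNIV (\<lambda>(u,v,t,s). ptheta \<psi> u v t s) \<and>
     (\<exists>G. continuous_on UNIV (\<lambda>(u,v,t,s). G u v t s) \<and>
          (\<forall>u v t s. pvartheta \<psi> u v t s = sin t * G u v t s))"

lemma continuous_on_compose4:
  fixes P :: "real \<Rightarrow> real \<Rightarrow> real \<Rightarrow> real \<Rightarrow> real"
  assumes "continuous_on UNIV (\<lambda>(u,v,t,s). P u v t s)"
    and "continuous_on S f1" "continuous_on S f2" "continuous_on S f3" "continuous_on S f4"
  shows "continuous_on S (\<lambda>x. P (f1 x) (f2 x) (f3 x) (f4 x))"
proof -
  have "continuous_on S (\<lambda>x. (\<lambda>(u,v,t,s). P u v t s) (f1 x, f2 x, f3 x, f4 x))"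
    by (rule continuous_on_compose2[OF assms(1)]) (auto intro!: continuous_intros assms(2-5))
  then show ?thesis by simp
qed

lemma deriv_along_curve:
  fixes \<Phi> :: "'a::real_normed_vector \<Rightarrow> real" and \<gamma> :: "real \<Rightarrow> 'a"
  assumes \<Phi>: "(\<Phi> has_derivative L) (at (\<gamma> x))" and \<gamma>: "(\<gamma> has_vector_derivative d) (at x)"
  shows "deriv (\<lambda>y. \<Phi> (\<gamma> y)) x = L d"
proof -
  have "((\<lambda>y. \<Phi> (\<gamma> y)) has_derivative (\<lambda>h. L (h *\<^sub>R d))) (at x)"
    using has_derivative_compose[OF \<gamma>[unfolded has_vector_derivative_def] \<Phi>] by (simp add: o_def)
  moreover have "(\<lambda>h. L (h *\<^sub>R d)) = (*) (L d)"
    using linear_scale[OF has_derivative_linear[OF \<Phi>]] by (auto simp: mult.commute)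
  ultimately have "((\<lambda>y. \<Phi> (\<gamma> y)) has_field_derivative L d) (at x)"
    by (simp add: has_field_derivative_def)
  then show ?thesis by (rule DERIV_imp_deriv)
qed

lemma linear_R5:
  fixes L :: "real \<times> real \<times> real \<times> real \<times> real \<Rightarrow> real"
  assumes "linear L"
  shows "L (a,b,c,d,e) = a * L (1,0,0,0,0) + b * L (0,1,0,0,0) + c * L (0,0,1,0,0)
                       + d * L (0,0,0,1,0) + e * L (0,0,0,0,1)"
proof -
  have "(a,b,c,d,e) = a *\<^sub>R (1,0,0,0,0) + b *\<^sub>R (0,1,0,0,0) + c *\<^sub>R (0,0,1,0,0)
      + d *\<^sub>R (0,0,0,1,0) + e *\<^sub>R (0::real,0::real,0::real,0::real,1::real)"
    by simp
  then show ?thesis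
    by (simp only: linear_add[OF assms] linear_scale[OF assms] real_scaleR_def)
qed

lemma sph_partials:
  fixes \<Phi> :: "real \<times> real \<times> real \<times> real \<times> real \<Rightarrow> real"
  assumes fd: "\<And>x. (\<Phi> has_derivative f' x) (at x)"
  defines "P \<equiv> \<lambda>u v t s. (u, v, sin t * cos s, sin t * sin s, cos t)"
  shows "pu (sph \<Phi>) u v t s = f' (P u v t s) (1, 0, 0, 0, 0)"
    and "pv (sph \<Phi>) u v t s = f' (P u v t s) (0, 1, 0, 0, 0)"
    and "ptheta (sph \<Phi>) u v t s = f' (P u v t s) (0, 0, cos t * cos s, cos t * sin s, - sin t)"
    and "pvartheta (sph \<Phi>) u v t s = f' (P u v t s) (0, 0, - sin t * sin s, sin t * cos s, 0)"
proof -
  show "pu (sph \<Phi>) u v t s = f' (P u v t s) (1, 0, 0, 0, 0)"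
    unfolding pu_def sph_def P_def
    by (rule deriv_along_curve[OF fd]) (auto intro!: derivative_eq_intros simp: zero_prod_def)
  show "pv (sph \<Phi>) u v t s = f' (P u v t s) (0, 1, 0, 0, 0)"
    unfolding pv_def sph_def P_def
    by (rule deriv_along_curve[OF fd]) (auto intro!: derivative_eq_intros simp: zero_prod_def)
  have "((\<lambda>y. (u, v, sin y * cos s, sin y * sin s, cos y)) has_vector_derivative
      (0, 0, cos t * cos s, cos t * sin s, - sin t)) (at t)"
    by (intro has_vector_derivative_Pair has_vector_derivative_const
        has_real_derivative_iff_has_vector_derivative[THEN iffD1] derivative_eq_intros refl) auto
  then show "ptheta (sph \<Phi>) u v t s = f' (P u v t s) (0, 0, cos t * cos s, cos t * sin s, - sin t)"
    unfolding ptheta_def sph_def P_def by (rule deriv_along_curve[OF fd])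
  have "((\<lambda>y. (u, v, sin t * cos y, sin t * sin y, cos t)) has_vector_derivative
      (0, 0, - sin t * sin s, sin t * cos s, 0)) (at s)"
    by (intro has_vector_derivative_Pair has_vector_derivative_const
        has_real_derivative_iff_has_vector_derivative[THEN iffD1] derivative_eq_intros refl) auto
  then show "pvartheta (sph \<Phi>) u v t s = f' (P u v t s) (0, 0, - sin t * sin s, sin t * cos s, 0)"
    unfolding pvartheta_def sph_def P_def by (rule deriv_along_curve[OF fd])
qed

lemma smooth_polar_C1:
  fixes \<Phi> :: "real \<times> real \<times> real \<times> real \<times> real \<Rightarrow> real"
  assumes "smooth_fun \<Phi>"
  shows "polar_C1 (sph \<Phi>)"
proof -
  have "\<Phi> \<in> Ck (Suc 0)" using assms unfolding smooth_fun_def by blast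
  then obtain f' where fd: "\<And>x. (\<Phi> has_derivative f' x) (at x)"
    and fc: "\<And>i. i \<in> Basis \<Longrightarrow> continuous_on UNIV (\<lambda>x. f' x i)"
    by (simp only: Ck.simps mem_Collect_eq) blast
  define D where "D i u v t s = f' (u, v, sin t * cos s, sin t * sin s, cos t) i" for i and u v t s :: real
  have cD: "continuous_on UNIV (\<lambda>(u,v,t,s). D i u v t s)" if "i \<in> Basis" for i
  proof -
    have "continuous_on UNIV (\<lambda>w. f' (fst w, fst (snd w), sin (fst (snd (snd w))) * cos (snd (snd (snd w))),
        sin (fst (snd (snd w))) * sin (snd (snd (snd w))), cos (fst (snd (snd w)))) i)"
      by (rule continuous_on_compose2[OF fc[OF that]]) (auto intro!: continuous_intros)
    then show ?thesis by (simp add: D_def case_prod_beta)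
  qed
  have basis: "((1::real),(0::real),(0::real),(0::real),(0::real)) \<in> Basis"
    "((0::real),(1::real),(0::real),(0::real),(0::real)) \<in> Basis"
    "((0::real),(0::real),(1::real),(0::real),(0::real)) \<in> Basis"
    "((0::real),(0::real),(0::real),(1::real),(0::real)) \<in> Basis"
    "((0::real),(0::real),(0::real),(0::real),(1::real)) \<in> Basis"
    by (simp_all add: Basis_prod_def zero_prod_def)
  note [continuous_intros] = continuous_on_compose4[OF cD[OF basis(1)]]
    continuous_on_compose4[OF cD[OF basis(2)]] continuous_on_compose4[OF cD[OF basis(3)]]
    continuous_on_compose4[OF cD[OF basis(4)]] continuous_on_compose4[OF cD[OF basis(5)]]
  have lin: "linear (f' x)" for x using fd has_derivative_linear by blast
  note expand = linear_R5[OF lin, of _ 0 0] and partials = sph_partials[OF fd]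
  have "ptheta (sph \<Phi>) u v t s = cos t * cos s * D (0,0,1,0,0) u v t s
      + cos t * sin s * D (0,0,0,1,0) u v t s - sin t * D (0,0,0,0,1) u v t s" for u v t s
    using expand[of _ "cos t * cos s" "cos t * sin s" "- sin t"] by (simp add: partials D_def)
  moreover have "pvartheta (sph \<Phi>) u v t s
      = sin t * (- sin s * D (0,0,1,0,0) u v t s + cos s * D (0,0,0,1,0) u v t s)" for u v t s
    using expand[of _ "- sin t * sin s" "sin t * cos s" 0] by (simp add: partials D_def algebra_simps)
  ultimately show ?thesis using partials(1,2)
    unfolding polar_C1_def
    by (intro conjI exI[of _ "\<lambda>u v t s. - sin s * D (0,0,1,0,0) u v t s + cos s * D (0,0,0,1,0) u v t s"])
       (simp_all add: D_def[symmetric] case_prod_beta' continuous_intros)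
qed


section \<open>Geometry of the Reissner--Nordstrom interior\<close>

text \<open>r_- and r_+ are the roots of r^2 - 2Mr + e^2, so 1 - 2M/r + e^2/r^2 factorizes.\<close>
lemma horizons:
  fixes M e :: real
  assumes "0 < \<bar>e\<bar>" "\<bar>e\<bar> < M"
  shows "0 < rminus M e" "rminus M e < rplus M e"
    and "\<And>\<rho>. 0 < \<rho> \<Longrightarrow> Dfun M e \<rho> = (\<rho> - rminus M e) * (\<rho> - rplus M e) / \<rho>^2"
proof -
  have "\<bar>e\<bar>^2 < M^2" by (rule power_strict_mono) (use assms in auto)
  then have e2: "e^2 < M^2" by simp
  have "sqrt (M^2 - e^2) < sqrt (M^2)" using assms by (intro real_sqrt_less_mono) simp
  then show "0 < rminus M e" using assms by (simp add: rminus_def)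
  show "rminus M e < rplus M e" using e2 by (simp add: rminus_def rplus_def)
  fix \<rho> :: real assume "0 < \<rho>"
  have "(sqrt (M^2 - e^2))^2 = M^2 - e^2" using e2 by simp
  then have "(\<rho> - rminus M e) * (\<rho> - rplus M e) = \<rho>^2 - 2 * M * \<rho> + e^2"
    unfolding rminus_def rplus_def by (simp add: algebra_simps power2_eq_square)
  then show "Dfun M e \<rho> = (\<rho> - rminus M e) * (\<rho> - rplus M e) / \<rho>^2"
    using \<open>0 < \<rho>\<close> unfolding Dfun_def by (simp add: field_simps power2_eq_square)
qed

lemma Om2_pos:
  assumes "0 < \<bar>e\<bar>" "\<bar>e\<bar> < M" "rminus M e < \<rho>" "\<rho> < rplus M e"
  shows "0 < Om2 M e \<rho>"
proof -
  note h = horizons[OF assms(1,2)]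
  have "0 < \<rho>" using h(1) assms(3) by linarith
  moreover have "(\<rho> - rminus M e) * (\<rho> - rplus M e) < 0" using assms(3,4) by (simp add: mult_pos_neg)
  ultimately show ?thesis using h(3) by (simp add: Om2_def divide_neg_pos)
qed

text \<open>Since dr/dr^* = -Omega^2 < 0, the area radius decreases along r^*.\<close>
lemma R_strict_decreasing:
  assumes "0 < \<bar>e\<bar>" "\<bar>e\<bar> < M"
    and Rb: "\<forall>s. rminus M e < R s \<and> R s < rplus M e"
    and Rd: "\<forall>s. (R has_real_derivative Dfun M e (R s)) (at s)"
    and "a < b"
  shows "R b < R a"
proof -
  have "Dfun M e (R s) < 0" for s
    using Om2_pos[OF assms(1,2), of "R s"] Rb by (simp add: Om2_def)
  then show ?thesis by (intro DERIV_neg_imp_decreasing[OF \<open>a < b\<close>]) (use Rd in blast)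
qed

lemma R_continuous:
  assumes "\<forall>s. (R has_real_derivative d s) (at s)"
  shows "continuous_on UNIV R"
  by (intro continuous_at_imp_continuous_on ballI) (use assms DERIV_isCont in blast)

lemma rstar_of_value:
  assumes "0 < \<bar>e\<bar>" "\<bar>e\<bar> < M"
    and Rb: "\<forall>s. rminus M e < R s \<and> R s < rplus M e"
    and Rd: "\<forall>s. (R has_real_derivative Dfun M e (R s)) (at s)"
    and Rbot: "(R \<longlongrightarrow> rplus M e) at_bot" and Rtop: "(R \<longlongrightarrow> rminus M e) at_top"
    and rb: "rminus M e < r_blue" "r_blue < rplus M e"
  shows "R (rstar_of R r_blue) = r_blue"
proof -
  note decr = R_strict_decreasing[OF assms(1-4)]
  obtain a where a: "r_blue < R a"
    using eventually_happens[OF order_tendstoD(1)[OF Rbot rb(2)]] by auto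
  obtain b where b: "R b < r_blue"
    using eventually_happens[OF order_tendstoD(2)[OF Rtop rb(1)]] by auto
  have "a < b" using a b decr by (metis not_less_iff_gr_or_eq order.strict_trans)
  then obtain x where x: "R x = r_blue"
    using IVT2[of R b r_blue a] a b Rd DERIV_isCont by fastforce
  have "y = x" if "R y = r_blue" for y
    using decr that x by (metis less_irrefl linorder_neqE_linordered_idom)
  then have "rstar_of R r_blue = x" unfolding rstar_of_def using x by blast
  then show ?thesis using x by simp
qed

lemma Om2_has_derivative:
  assumes "0 < \<rho>"
  shows "(Om2 M e has_real_derivative (- (2 / \<rho>^2) * (M - e^2 / \<rho>))) (at \<rho>)"
proof -
  have "((\<lambda>\<rho>. - (1 - 2 * M/\<rho> + e^2/\<rho>^2)) has_real_derivative (- (2 / \<rho>^2) * (M - e^2 / \<rho>))) (at \<rho>)"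
    using assms by (auto intro!: derivative_eq_intros simp: field_simps power2_eq_square power3_eq_cube)
  then show ?thesis unfolding Om2_def[abs_def] Dfun_def .
qed

text \<open>Blue-shift: beyond r^*_blue, Omega^2 decays like exp(-4 beta r^*), because
  d/dr^* log Omega^2 = (2/r^2)(M - e^2/r) <= -4 beta there.\<close>
lemma Om2_decay:
  assumes "0 < \<bar>e\<bar>" "\<bar>e\<bar> < M"
    and Rb: "\<forall>s. rminus M e < R s \<and> R s < rplus M e"
    and Rd: "\<forall>s. (R has_real_derivative Dfun M e (R s)) (at s)"
    and sb: "R sb = r_blue"
    and hb: "\<forall>\<rho>. rminus M e < \<rho> \<and> \<rho> \<le> r_blue \<longrightarrow> - (1/(2 * \<rho>^2)) * (M - e^2/\<rho>) \<ge> \<beta>"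
    and "sb \<le> s"
  shows "Om2 M e (R s) \<le> Om2 M e r_blue * exp (- 4 * \<beta> * (s - sb))"
proof -
  define g where "g x = Om2 M e (R x) * exp (4 * \<beta> * x)" for x
  have "\<exists>y. (g has_real_derivative y) (at x) \<and> y \<le> 0" if x: "sb \<le> x" for x
  proof -
    have r: "0 < R x" "rminus M e < R x"
      using Rb horizons(1)[OF assms(1,2)] by (auto intro: order.strict_trans)
    have "R x \<le> r_blue"
      using R_strict_decreasing[OF assms(1-4), of sb x] x sb by (cases "sb = x") auto
    have dO: "((\<lambda>x. Om2 M e (R x)) has_real_derivative
        (- (2 / (R x)^2) * (M - e^2 / R x)) * Dfun M e (R x)) (at x)"
      by (rule DERIV_chain2[OF Om2_has_derivative[where M = M and e = e, OF r(1)] Rd[rule_format]])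
    have "(g has_real_derivative (- (2 / (R x)^2) * (M - e^2 / R x)) * Dfun M e (R x) * exp (4 * \<beta> * x)
        + exp (4 * \<beta> * x) * (4 * \<beta>) * Om2 M e (R x)) (at x)"
      unfolding g_def by (rule DERIV_mult[OF dO]) (auto intro!: derivative_eq_intros)
    moreover have "(- (2 / (R x)^2) * (M - e^2 / R x)) * Dfun M e (R x) * exp (4 * \<beta> * x)
        + exp (4 * \<beta> * x) * (4 * \<beta>) * Om2 M e (R x)
        = (2 / (R x)^2 * (M - e^2 / R x) + 4 * \<beta>) * (Om2 M e (R x) * exp (4 * \<beta> * x))"
      using r(1) by (simp add: Om2_def field_simps)
    ultimately have "(g has_real_derivative
        (2 / (R x)^2 * (M - e^2 / R x) + 4 * \<beta>) * (Om2 M e (R x) * exp (4 * \<beta> * x))) (at x)"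
      by simp
    moreover have "2 / (R x)^2 * (M - e^2 / R x) + 4 * \<beta> \<le> 0"
      using hb r \<open>R x \<le> r_blue\<close> by (auto simp: field_simps)
    moreover have "0 \<le> Om2 M e (R x) * exp (4 * \<beta> * x)"
      using Om2_pos[OF assms(1,2)] Rb by (simp add: less_imp_le)
    ultimately show ?thesis by (blast intro: mult_nonpos_nonneg)
  qed
  from DERIV_nonpos_imp_nonincreasing[OF \<open>sb \<le> s\<close> this]
  have "Om2 M e (R s) * exp (4 * \<beta> * s) \<le> Om2 M e r_blue * exp (4 * \<beta> * sb)"
    unfolding g_def sb by simp
  then have "Om2 M e (R s) \<le> Om2 M e r_blue * exp (4 * \<beta> * sb) / exp (4 * \<beta> * s)"
    by (simp add: field_simps)
  also have "\<dots> = Om2 M e r_blue * exp (4 * \<beta> * sb - 4 * \<beta> * s)"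
    by (simp add: exp_diff)
  also have "\<dots> = Om2 M e r_blue * exp (- 4 * \<beta> * (s - sb))"
    by (simp add: algebra_simps)
  finally show ?thesis .
qed

lemma Om2_blueshift_bounds:
  assumes "0 < \<bar>e\<bar>" "\<bar>e\<bar> < M"
    and Rb: "\<forall>s. rminus M e < R s \<and> R s < rplus M e"
    and Rd: "\<forall>s. (R has_real_derivative Dfun M e (R s)) (at s)"
    and sb: "R sb = r_blue"
    and hb: "\<forall>\<rho>. rminus M e < \<rho> \<and> \<rho> \<le> r_blue \<longrightarrow> - (1/(2 * \<rho>^2)) * (M - e^2/\<rho>) \<ge> \<beta>"
    and "0 < \<beta>" "2 * sb \<le> u + v"
  shows "Om2 M e (rr R u v) \<le> Om2 M e r_blue"
    and "uw \<le> u \<Longrightarrow> Om2 M e (rr R u v) \<le> Om2 M e r_blue * exp (4 * \<beta> * sb - 2 * \<beta> * uw) * exp (-2 * \<beta> * v)"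
proof -
  have decay: "Om2 M e (rr R u v) \<le> Om2 M e r_blue * exp (- 4 * \<beta> * ((u+v)/2 - sb))"
    unfolding rr_def using assms by (intro Om2_decay[OF assms(1-6)]) auto
  have Ob: "0 \<le> Om2 M e r_blue" using Om2_pos[OF assms(1,2)] Rb sb by (metis less_imp_le)
  have "0 \<le> \<beta> * ((u+v)/2 - sb)" using assms(7,8) by simp
  then have "exp (- 4 * \<beta> * ((u+v)/2 - sb)) \<le> 1" by simp
  from order.trans[OF decay mult_left_mono[OF this Ob]]
  show "Om2 M e (rr R u v) \<le> Om2 M e r_blue" by simp
  show "Om2 M e (rr R u v) \<le> Om2 M e r_blue * exp (4 * \<beta> * sb - 2 * \<beta> * uw) * exp (-2 * \<beta> * v)"
    if "uw \<le> u"
  proof -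
    have "- 4 * \<beta> * ((u+v)/2 - sb) = (4 * \<beta> * sb - 2 * \<beta> * uw) + (-2 * \<beta> * v) - 2 * (\<beta> * (u - uw))"
      by (simp add: field_simps)
    moreover have "0 \<le> \<beta> * (u - uw)" using that assms(7) by simp
    ultimately have "exp (- 4 * \<beta> * ((u+v)/2 - sb)) \<le> exp (4 * \<beta> * sb - 2 * \<beta> * uw) * exp (-2 * \<beta> * v)"
      by (simp flip: exp_add)
    from order.trans[OF decay mult_left_mono[OF this Ob]] show ?thesis by (simp add: mult.assoc)
  qed
qed

lemma u_gamma_decreasing:
  assumes "0 < \<alpha>" "\<alpha> < v" "v < w"
  shows "u_gamma \<alpha> sb w < u_gamma \<alpha> sb v"
proof -
  have "\<exists>y. ((\<lambda>x. \<alpha> * ln x + 2 * sb - x) has_real_derivative y) (at x) \<and> y < 0" if "v \<le> x" for x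
  proof -
    have "0 < x" "\<alpha> < x" using that assms by auto
    then have "((\<lambda>x. \<alpha> * ln x + 2 * sb - x) has_real_derivative (\<alpha> / x - 1)) (at x)"
      by (auto intro!: derivative_eq_intros)
    moreover have "\<alpha> / x - 1 < 0" using \<open>0 < x\<close> \<open>\<alpha> < x\<close> by (simp add: field_simps)
    ultimately show ?thesis by blast
  qed
  from DERIV_neg_imp_decreasing[OF \<open>v < w\<close> this] show ?thesis
    unfolding u_gamma_def by simp
qed

lemma v_gamma_u_gamma:
  assumes "0 < \<alpha>" "2 * \<alpha> < v0"
  shows "v_gamma \<alpha> sb (u_gamma \<alpha> sb v0) = v0"
  unfolding v_gamma_def
proof (rule the_equality)
  fix v assume v: "2 * \<alpha> < v \<and> u_gamma \<alpha> sb v = u_gamma \<alpha> sb v0"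
  show "v = v0"
  proof (rule ccontr)
    assume "v \<noteq> v0"
    then consider "v < v0" | "v0 < v" by linarith
    then show False
    proof cases
      case 1 with u_gamma_decreasing[of \<alpha> v v0 sb] assms v show False by simp
    next
      case 2 with u_gamma_decreasing[of \<alpha> v0 v sb] assms v show False by simp
    qed
  qed
qed (use assms in simp)


text \<open>Tail of the weight v^p exp(-2 beta v): once beta v >= p the derivative of the weight is at most
  -beta times the weight, so its integral from v_star is at most v_star^p exp(-2 beta v_star)/beta.\<close>
lemma tail_integral_bound:
  fixes \<beta> p vs vh :: real
  assumes "\<beta> > 0" "p \<ge> 0" "vs > 0" "p \<le> \<beta> * vs" "vs \<le> vh"
  shows "integral {vs..vh} (\<lambda>v. v powr p * exp (-2 * \<beta> * v)) \<le> vs powr p * exp (-2 * \<beta> * vs) / \<beta>"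
proof -
  define G where "G x = x powr p * exp (-2 * \<beta> * x)" for x
  define G' where "G' x = p * x powr (p - 1) * exp (-2 * \<beta> * x) + x powr p * (exp (-2 * \<beta> * x) * (-2 * \<beta>))" for x
  have dG: "(G has_real_derivative G' x) (at x)" if "x > 0" for x
    unfolding G_def G'_def using that
    by (auto intro!: derivative_eq_intros)
  have ftc: "(G' has_integral G vh - G vs) {vs..vh}"
  proof (rule fundamental_theorem_of_calculus[OF \<open>vs \<le> vh\<close>])
    fix x assume "x \<in> {vs..vh}"
    then have "x > 0" using assms by simp
    show "(G has_vector_derivative G' x) (at x within {vs..vh})"
      using dG[OF \<open>x > 0\<close>] has_real_derivative_iff_has_vector_derivative
      by (metis has_field_derivative_at_within)
  qed
  have le: "x powr p * exp (-2 * \<beta> * x) \<le> - G' x / \<beta>" if "x \<in> {vs..vh}" for x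
  proof -
    have x: "x > 0" "p \<le> \<beta> * x" using that assms
      by (auto intro: order.trans[OF assms(4)] mult_left_mono)
    have xp: "x powr p = x * x powr (p - 1)" using x(1) by (simp add: powr_mult_base)
    have "p * x powr (p - 1) \<le> \<beta> * x powr p"
      using x xp by (simp add: mult_right_mono)
    then have "p * x powr (p - 1) * exp (-2 * \<beta> * x) \<le> \<beta> * x powr p * exp (-2 * \<beta> * x)"
      by (simp add: mult_right_mono)
    then have "G' x \<le> - \<beta> * (x powr p * exp (-2 * \<beta> * x))"
      unfolding G'_def by (simp add: algebra_simps)
    then show ?thesis using assms(1) by (simp add: field_simps)
  qed
  have hint: "(\<lambda>v. v powr p * exp (-2 * \<beta> * v)) integrable_on {vs..vh}"
    by (rule integrable_continuous_interval) (use assms in \<open>auto intro!: continuous_intros\<close>)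
  have hi2: "((\<lambda>x. - G' x / \<beta>) has_integral (- (G vh - G vs) / \<beta>)) {vs..vh}"
    using has_integral_divide[OF has_integral_neg[OF ftc]] by simp
  have "integral {vs..vh} (\<lambda>v. v powr p * exp (-2 * \<beta> * v)) \<le> integral {vs..vh} (\<lambda>x. - G' x / \<beta>)"
    by (rule integral_le[OF hint]) (use hi2 le in auto)
  also have "\<dots> = - (G vh - G vs) / \<beta>"
    using hi2 by (rule integral_unique)
  also have "\<dots> \<le> G vs / \<beta>"
    using assms by (simp add: G_def divide_right_mono)
  finally show ?thesis unfolding G_def .
qed

text \<open>Pointwise bound for the density of |K~^W| dVol: since V = v^p >= 1, AM--GM gives
  (V + 1)|x||y| <= V (x^2 + y^2), and r >= r_- turns r Omega^2 into Omega^2 r^2 / r_-.\<close>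
lemma Ktilde_density_bound:
  fixes r rm Om V x y :: real
  assumes "0 < rm" "rm \<le> r" "0 \<le> Om" "1 \<le> V"
  shows "\<bar>- (2 / r) * (V + 1) * x * y\<bar> * r^2 * Om / 2
     \<le> Om / rm * (V * x^2 * r^2) + Om / rm * (V * y^2 * r^2)"
proof -
  have r: "0 < r" using assms by linarith
  have "\<bar>- (2 / r) * (V + 1) * x * y\<bar> * r^2 * Om / 2 = r * Om * ((V + 1) * (\<bar>x\<bar> * \<bar>y\<bar>))"
    using r assms by (simp add: abs_mult power2_eq_square)
  also have "\<dots> \<le> r * Om * (V * (x^2 + y^2))"
  proof (rule mult_left_mono)
    have "2 * (\<bar>x\<bar> * \<bar>y\<bar>) \<le> x^2 + y^2"
      using sum_squares_bound[of "\<bar>x\<bar>" "\<bar>y\<bar>"] by simp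
    then have "(V + 1) * (\<bar>x\<bar> * \<bar>y\<bar>) \<le> (2 * V) * ((x^2 + y^2) / 2)"
      using assms(4) by (intro mult_mono) auto
    then show "(V + 1) * (\<bar>x\<bar> * \<bar>y\<bar>) \<le> V * (x^2 + y^2)" by simp
  qed (use r assms in simp)
  also have "\<dots> \<le> Om / rm * r^2 * (V * (x^2 + y^2))"
  proof (rule mult_right_mono)
    have "Om * (r * rm) \<le> Om * (r * r)" using r assms by (intro mult_left_mono) auto
    then show "r * Om \<le> Om / rm * r^2" using assms(1) by (simp add: field_simps power2_eq_square)
  qed (use assms in simp)
  also have "\<dots> = Om / rm * (V * x^2 * r^2) + Om / rm * (V * y^2 * r^2)"
    by (simp add: algebra_simps)
  finally show ?thesis .
qed


section \<open>Energy fluxes and the error term of the W-energy identity\<close>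

lemma le_SUP_continuous:
  fixes F :: "real \<Rightarrow> real"
  assumes "continuous_on {a..b} F" "x \<in> {a..b}"
  shows "F x \<le> (SUP y\<in>{a..b}. F y)"
proof -
  have "bdd_above (F ` {a..b})"
    using compact_continuous_image[OF assms(1) compact_Icc] by (simp add: bounded_imp_bdd_above compact_imp_bounded)
  then show ?thesis using assms(2) by (rule cSUP_upper2) simp
qed

lemma angsq_times_sin:
  assumes "\<And>u v t s. pvartheta \<psi> u v t s = sin t * G u v t s"
  shows "angsq R \<psi> u v t s * sin t = ((ptheta \<psi> u v t s)^2 + (G u v t s)^2) / (rr R u v)^2 * sin t"
proof (cases "sin t = 0")
  case False
  then have "(sin t * G u v t s)^2 / (sin t)^2 = (G u v t s)^2" by (simp add: power_mult_distrib)
  then show ?thesis unfolding angsq_def assms by simp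
qed simp

lemma flux_density_times_sin:
  assumes "\<And>u v t s. pvartheta \<psi> u v t s = sin t * G u v t s"
  shows "(a + Om2 M e (rr R u v) / 4 * b * angsq R \<psi> u v t s) * (rr R u v)^2 * sin t
       = (a + Om2 M e (rr R u v) / 4 * b * (((ptheta \<psi> u v t s)^2 + (G u v t s)^2) / (rr R u v)^2))
         * (rr R u v)^2 * sin t"
proof -
  have "(a + Om2 M e (rr R u v) / 4 * b * angsq R \<psi> u v t s) * (rr R u v)^2 * sin t
      = a * (rr R u v)^2 * sin t + Om2 M e (rr R u v) / 4 * b * (rr R u v)^2 * (angsq R \<psi> u v t s * sin t)"
    by (simp add: algebra_simps)
  also have "\<dots> = (a + Om2 M e (rr R u v) / 4 * b * (((ptheta \<psi> u v t s)^2 + (G u v t s)^2) / (rr R u v)^2))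
         * (rr R u v)^2 * sin t"
    unfolding angsq_times_sin[OF assms] by (simp add: algebra_simps)
  finally show ?thesis .
qed

lemma flux_u_bounds:
  fixes \<psi> :: "real \<Rightarrow> real \<Rightarrow> real \<Rightarrow> real \<Rightarrow> real" and R :: "real \<Rightarrow> real"
  assumes \<psi>: "polar_C1 \<psi>" and Rc: "continuous_on UNIV R" and Rpos: "\<And>s. 0 < R s"
    and Om: "\<And>s. 0 \<le> Om2 M e (R s)" and "0 < vs"
  shows "continuous_on UNIV (\<lambda>ub. flux_u M e R W_u (W_v p) \<psi> ub vs vh)"
    and "sph_int (\<lambda>t s. integral {vs..vh} (\<lambda>v. v powr p * (pv \<psi> ub v t s)^2 * (rr R ub v)^2))
         \<le> flux_u M e R W_u (W_v p) \<psi> ub vs vh"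
    and "0 \<le> flux_u M e R W_u (W_v p) \<psi> ub vs vh"
proof -
  obtain G where cv: "continuous_on UNIV (\<lambda>(u,v,t,s). pv \<psi> u v t s)"
    and ct: "continuous_on UNIV (\<lambda>(u,v,t,s). ptheta \<psi> u v t s)"
    and cG: "continuous_on UNIV (\<lambda>(u,v,t,s). G u v t s)"
    and G: "\<And>u v t s. pvartheta \<psi> u v t s = sin t * G u v t s"
    using \<psi> unfolding polar_C1_def by blast
  have cR [continuous_intros]: "continuous_on S g \<Longrightarrow> continuous_on S (\<lambda>x. R (g x))"
    for S :: "(real \<times> real \<times> real \<times> real) set" and g
    by (rule continuous_on_compose2[OF Rc]) auto
  note [continuous_intros] = continuous_on_compose4[OF cv] continuous_on_compose4[OF ct]
    continuous_on_compose4[OF cG]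
  define F where "F ub v t s = (v powr p * (pv \<psi> ub v t s)^2 + Om2 M e (rr R ub v) / 4
      * (((ptheta \<psi> ub v t s)^2 + (G ub v t s)^2) / (rr R ub v)^2)) * (rr R ub v)^2" for ub v t s
  define A where "A ub v t s = v powr p * (pv \<psi> ub v t s)^2 * (rr R ub v)^2" for ub v t s
  have flux: "flux_u M e R W_u (W_v p) \<psi> ub vs vh = sph_int (\<lambda>t s. integral {vs..vh} (\<lambda>v. F ub v t s))"
    for ub
    unfolding flux_u_def W_u_def W_v_def
    by (rule sph_int_integral_cong_sin) (simp only: flux_density_times_sin[OF G], simp add: F_def)
  have cF: "cont_box UNIV {vs..vh} F"
    unfolding F_def rr_def Om2_def Dfun_def
    by (intro cont_boxI continuous_intros) (use \<open>0 < vs\<close> Rpos in \<open>auto simp: less_imp_neq[symmetric]\<close>)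
  have cA: "cont_box UNIV {vs..vh} A"
    unfolding A_def rr_def by (intro cont_boxI continuous_intros) (use \<open>0 < vs\<close> in auto)
  have A_le_F: "0 \<le> A ub v t s \<and> A ub v t s \<le> F ub v t s" for ub v t s
    unfolding A_def F_def using Om[of "(ub + v) / 2"] by (simp add: rr_def algebra_simps)
  show "continuous_on UNIV (\<lambda>ub. flux_u M e R W_u (W_v p) \<psi> ub vs vh)"
    unfolding flux by (rule continuous_on_sph_int_param[OF continuous_on_integral_second[OF cF]])
  have A_flux: "sph_int (\<lambda>t s. integral {vs..vh} (\<lambda>v. A ub v t s)) \<le> flux_u M e R W_u (W_v p) \<psi> ub vs vh"
    unfolding flux using A_le_F
    by (intro sph_int_integral_mono[OF cont_box_slice[OF cA] cont_box_slice[OF cF]]) auto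
  then show "sph_int (\<lambda>t s. integral {vs..vh} (\<lambda>v. v powr p * (pv \<psi> ub v t s)^2 * (rr R ub v)^2))
      \<le> flux_u M e R W_u (W_v p) \<psi> ub vs vh"
    by (simp add: A_def)
  have "sph_int (\<lambda>t s. integral {vs..vh} (\<lambda>v. 0)) \<le> sph_int (\<lambda>t s. integral {vs..vh} (\<lambda>v. A ub v t s))"
    using A_le_F by (intro sph_int_integral_mono[OF _ cont_box_slice[OF cA]]) auto
  with A_flux show "0 \<le> flux_u M e R W_u (W_v p) \<psi> ub vs vh"
    by (simp add: sph_int_def)
qed

lemma flux_v_bounds:
  fixes \<psi> :: "real \<Rightarrow> real \<Rightarrow> real \<Rightarrow> real \<Rightarrow> real" and R :: "real \<Rightarrow> real"
  assumes \<psi>: "polar_C1 \<psi>" and Rc: "continuous_on UNIV R" and Rpos: "\<And>s. 0 < R s"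
    and Om: "\<And>s. 0 \<le> Om2 M e (R s)"
  shows "continuous_on {0<..} (\<lambda>vb. flux_v M e R W_u (W_v p) \<psi> vb a b)"
    and "0 < vb \<Longrightarrow> sph_int (\<lambda>t s. integral {a..b} (\<lambda>u. (pu \<psi> u vb t s)^2 * (rr R u vb)^2))
         \<le> flux_v M e R W_u (W_v p) \<psi> vb a b"
    and "0 < vb \<Longrightarrow> 0 \<le> flux_v M e R W_u (W_v p) \<psi> vb a b"
proof -
  obtain G where cu: "continuous_on UNIV (\<lambda>(u,v,t,s). pu \<psi> u v t s)"
    and ct: "continuous_on UNIV (\<lambda>(u,v,t,s). ptheta \<psi> u v t s)"
    and cG: "continuous_on UNIV (\<lambda>(u,v,t,s). G u v t s)"
    and G: "\<And>u v t s. pvartheta \<psi> u v t s = sin t * G u v t s"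
    using \<psi> unfolding polar_C1_def by blast
  have cR [continuous_intros]: "continuous_on S g \<Longrightarrow> continuous_on S (\<lambda>x. R (g x))"
    for S :: "(real \<times> real \<times> real \<times> real) set" and g
    by (rule continuous_on_compose2[OF Rc]) auto
  note [continuous_intros] = continuous_on_compose4[OF cu] continuous_on_compose4[OF ct]
    continuous_on_compose4[OF cG]
  define F where "F vb u t s = ((pu \<psi> u vb t s)^2 + Om2 M e (rr R u vb) / 4 * vb powr p
      * (((ptheta \<psi> u vb t s)^2 + (G u vb t s)^2) / (rr R u vb)^2)) * (rr R u vb)^2" for vb u t s
  define B where "B vb u t s = (pu \<psi> u vb t s)^2 * (rr R u vb)^2" for vb u t s
  have flux: "flux_v M e R W_u (W_v p) \<psi> vb a b = sph_int (\<lambda>t s. integral {a..b} (\<lambda>u. F vb u t s))"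
    for vb
    unfolding flux_v_def W_u_def W_v_def
    by (rule sph_int_integral_cong_sin) (simp only: flux_density_times_sin[OF G], simp add: F_def)
  have cF: "cont_box {0<..} {a..b} F"
    unfolding F_def rr_def Om2_def Dfun_def
    by (intro cont_boxI continuous_intros) (use Rpos in \<open>auto simp: less_imp_neq[symmetric]\<close>)
  have cB: "cont_box {0<..} {a..b} B"
    unfolding B_def rr_def by (intro cont_boxI continuous_intros) auto
  have B_le_F: "0 \<le> B vb u t s \<and> B vb u t s \<le> F vb u t s" for u t s
    unfolding B_def F_def using Om[of "(u + vb) / 2"] by (simp add: rr_def algebra_simps)
  show "continuous_on {0<..} (\<lambda>vb. flux_v M e R W_u (W_v p) \<psi> vb a b)"
    unfolding flux by (rule continuous_on_sph_int_param[OF continuous_on_integral_second[OF cF]])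
  assume "0 < vb"
  then have vb: "vb \<in> {0<..}" by simp
  have B_flux: "sph_int (\<lambda>t s. integral {a..b} (\<lambda>u. B vb u t s)) \<le> flux_v M e R W_u (W_v p) \<psi> vb a b"
    unfolding flux using B_le_F
    by (intro sph_int_integral_mono[OF cont_box_slice[OF cB vb] cont_box_slice[OF cF vb]]) auto
  then show "sph_int (\<lambda>t s. integral {a..b} (\<lambda>u. (pu \<psi> u vb t s)^2 * (rr R u vb)^2))
      \<le> flux_v M e R W_u (W_v p) \<psi> vb a b"
    by (simp add: B_def)
  have "sph_int (\<lambda>t s. integral {a..b} (\<lambda>u. 0)) \<le> sph_int (\<lambda>t s. integral {a..b} (\<lambda>u. B vb u t s))"
    using B_le_F by (intro sph_int_integral_mono[OF _ cont_box_slice[OF cB vb]]) auto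
  with B_flux show "0 \<le> flux_v M e R W_u (W_v p) \<psi> vb a b"
    by (simp add: sph_int_def)
qed

lemma flux_sup_bounds:
  fixes \<psi> :: "real \<Rightarrow> real \<Rightarrow> real \<Rightarrow> real \<Rightarrow> real" and R :: "real \<Rightarrow> real"
  assumes \<psi>: "polar_C1 \<psi>" and Rc: "continuous_on UNIV R" and Rpos: "\<And>s. 0 < R s"
    and Om: "\<And>s. 0 \<le> Om2 M e (R s)" and "0 < vs" "u1 \<le> u2" "vs \<le> vh"
  shows "\<And>ub. ub \<in> {u1..u2} \<Longrightarrow>
          sph_int (\<lambda>t s. integral {vs..vh} (\<lambda>v. v powr p * (pv \<psi> ub v t s)^2 * (rr R ub v)^2))
          \<le> (SUP ub\<in>{u1..u2}. flux_u M e R W_u (W_v p) \<psi> ub vs vh)"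
    and "0 \<le> (SUP ub\<in>{u1..u2}. flux_u M e R W_u (W_v p) \<psi> ub vs vh)"
    and "\<And>vb. vb \<in> {vs..vh} \<Longrightarrow>
          sph_int (\<lambda>t s. integral {u1..u2} (\<lambda>u. (pu \<psi> u vb t s)^2 * (rr R u vb)^2))
          \<le> (SUP vb\<in>{vs..vh}. flux_v M e R W_u (W_v p) \<psi> vb u1 u2)"
    and "0 \<le> (SUP vb\<in>{vs..vh}. flux_v M e R W_u (W_v p) \<psi> vb u1 u2)"
proof -
  note flux_u = flux_u_bounds[OF \<psi> Rc Rpos Om \<open>0 < vs\<close>, where p = p and vh = vh]
    and flux_v = flux_v_bounds[OF \<psi> Rc Rpos Om, where p = p and a = u1 and b = u2]
  have Su: "flux_u M e R W_u (W_v p) \<psi> ub vs vh \<le> (SUP ub\<in>{u1..u2}. flux_u M e R W_u (W_v p) \<psi> ub vs vh)"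
    if "ub \<in> {u1..u2}" for ub
    by (rule le_SUP_continuous[OF continuous_on_subset[OF flux_u(1)] that]) simp
  have Sv: "flux_v M e R W_u (W_v p) \<psi> vb u1 u2 \<le> (SUP vb\<in>{vs..vh}. flux_v M e R W_u (W_v p) \<psi> vb u1 u2)"
    if "vb \<in> {vs..vh}" for vb
    by (rule le_SUP_continuous[OF continuous_on_subset[OF flux_v(1)] that]) (use \<open>0 < vs\<close> in auto)
  show "sph_int (\<lambda>t s. integral {vs..vh} (\<lambda>v. v powr p * (pv \<psi> ub v t s)^2 * (rr R ub v)^2))
      \<le> (SUP ub\<in>{u1..u2}. flux_u M e R W_u (W_v p) \<psi> ub vs vh)" if "ub \<in> {u1..u2}" for ub
    using flux_u(2) Su[OF that] by (rule order.trans)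
  show "0 \<le> (SUP ub\<in>{u1..u2}. flux_u M e R W_u (W_v p) \<psi> ub vs vh)"
    using flux_u(3) Su[of u1] \<open>u1 \<le> u2\<close> by (meson atLeastAtMost_iff order.trans order_refl)
  show "sph_int (\<lambda>t s. integral {u1..u2} (\<lambda>u. (pu \<psi> u vb t s)^2 * (rr R u vb)^2))
      \<le> (SUP vb\<in>{vs..vh}. flux_v M e R W_u (W_v p) \<psi> vb u1 u2)" if "vb \<in> {vs..vh}" for vb
    using flux_v(2) Sv[OF that] that \<open>0 < vs\<close> by (meson atLeastAtMost_iff less_le_trans order.trans)
  show "0 \<le> (SUP vb\<in>{vs..vh}. flux_v M e R W_u (W_v p) \<psi> vb u1 u2)"
    using flux_v(3)[of vs] Sv[of vs] \<open>0 < vs\<close> \<open>vs \<le> vh\<close> by (meson atLeastAtMost_iff order.trans order_refl)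
qed

lemma Ktilde_density_split:
  assumes "0 < rm" "rm \<le> rr R u v" "0 \<le> Om2 M e (rr R u v)" "Om2 M e (rr R u v) \<le> Ob"
    and "Om2 M e (rr R u v) \<le> Kd * exp (-2 * \<beta> * v)" and "1 \<le> v powr p"
  shows "\<bar>KtildeW R p \<psi> u v t s\<bar> * (rr R u v)^2 * Om2 M e (rr R u v) / 2
    \<le> Ob / rm * (v powr p * (pv \<psi> u v t s)^2 * (rr R u v)^2)
      + Kd / rm * ((v powr p * exp (-2 * \<beta> * v)) * ((pu \<psi> u v t s)^2 * (rr R u v)^2))"
proof -
  let ?Om = "Om2 M e (rr R u v)"
  have "\<bar>KtildeW R p \<psi> u v t s\<bar> * (rr R u v)^2 * ?Om / 2
      \<le> ?Om / rm * (v powr p * (pv \<psi> u v t s)^2 * (rr R u v)^2)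
        + ?Om / rm * (v powr p * (pu \<psi> u v t s)^2 * (rr R u v)^2)"
    unfolding KtildeW_def by (rule Ktilde_density_bound[OF assms(1-3,6)])
  also have "\<dots> \<le> Ob / rm * (v powr p * (pv \<psi> u v t s)^2 * (rr R u v)^2)
      + Kd * exp (-2 * \<beta> * v) / rm * (v powr p * (pu \<psi> u v t s)^2 * (rr R u v)^2)"
    using assms by (intro add_mono mult_right_mono divide_right_mono) auto
  finally show ?thesis by (simp add: algebra_simps)
qed

lemma Ktilde_estimate:
  fixes \<psi> :: "real \<Rightarrow> real \<Rightarrow> real \<Rightarrow> real \<Rightarrow> real" and R :: "real \<Rightarrow> real"
  assumes \<psi>: "polar_C1 \<psi>" and Rc: "continuous_on UNIV R"
    and rm: "0 < rm" "\<And>s. rm \<le> R s" and Om: "\<And>s. 0 \<le> Om2 M e (R s)"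
    and Om_Ob: "\<And>u v. u1 \<le> u \<Longrightarrow> vs \<le> v \<Longrightarrow> Om2 M e (rr R u v) \<le> Ob"
    and Om_Kd: "\<And>u v. u1 \<le> u \<Longrightarrow> vs \<le> v \<Longrightarrow> Om2 M e (rr R u v) \<le> Kd * exp (-2 * \<beta> * v)"
    and \<beta>: "0 < \<beta>" and p: "0 \<le> p" "p \<le> \<beta> * vs" and vs: "1 \<le> vs" "vs < vh"
    and u: "u1 < u2" "u2 - u1 \<le> \<epsilon>"
  shows "vol_int M e R (\<lambda>u v t s. \<bar>KtildeW R p \<psi> u v t s\<bar>) u1 u2 vs vh
     \<le> Ob / rm * \<epsilon> * (SUP ub\<in>{u1..u2}. flux_u M e R W_u (W_v p) \<psi> ub vs vh)
       + Kd / rm * (vs powr p * exp (-2 * \<beta> * vs) / \<beta>)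
         * (SUP vb\<in>{vs..vh}. flux_v M e R W_u (W_v p) \<psi> vb u1 u2)"
proof -
  have Rpos: "0 < R s" for s using rm by (metis order.strict_trans2)
  have "0 < vs" "u1 \<le> u2" "vs \<le> vh" using vs u by auto
  note sups = flux_sup_bounds[OF \<psi> Rc Rpos Om this, where p = p]
  have Ob0: "0 \<le> Ob" using Om[of "(u1 + vs) / 2"] Om_Ob[of u1 vs] by (simp add: rr_def)
  have "0 \<le> Kd * exp (-2 * \<beta> * vs)" using Om[of "(u1 + vs) / 2"] Om_Kd[of u1 vs] by (simp add: rr_def)
  then have Kd0: "0 \<le> Kd" by (simp add: zero_le_mult_iff)
  obtain cu: "continuous_on UNIV (\<lambda>(u,v,t,s). pu \<psi> u v t s)"
    and cv: "continuous_on UNIV (\<lambda>(u,v,t,s). pv \<psi> u v t s)"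
    using \<psi> unfolding polar_C1_def by blast
  have cR [continuous_intros]: "continuous_on S g \<Longrightarrow> continuous_on S (\<lambda>x. R (g x))"
    for S :: "(real \<times> real \<times> real \<times> real) set" and g
    by (rule continuous_on_compose2[OF Rc]) auto
  note [continuous_intros] = continuous_on_compose4[OF cu] continuous_on_compose4[OF cv]
  define w where "w v = v powr p * exp (-2 * \<beta> * v)" for v :: real
  have "vol_int M e R (\<lambda>u v t s. \<bar>KtildeW R p \<psi> u v t s\<bar>) u1 u2 vs vh
      = box_int u1 u2 vs vh (\<lambda>u v t s. \<bar>KtildeW R p \<psi> u v t s\<bar> * (rr R u v)^2 * Om2 M e (rr R u v) / 2)"
    unfolding vol_int_def box_int_def by simp
  also have "\<dots> \<le> Ob / rm * ((u2 - u1) * (SUP ub\<in>{u1..u2}. flux_u M e R W_u (W_v p) \<psi> ub vs vh))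
      + Kd / rm * (integral {vs..vh} w * (SUP vb\<in>{vs..vh}. flux_v M e R W_u (W_v p) \<psi> vb u1 u2))"
  proof (rule box_integral_split)
    show "cont_box {u1..u2} {vs..vh} (\<lambda>u v t s. \<bar>KtildeW R p \<psi> u v t s\<bar> * (rr R u v)^2 * Om2 M e (rr R u v) / 2)"
      unfolding KtildeW_def rr_def Om2_def Dfun_def
      by (intro cont_boxI continuous_intros) (use vs Rpos in \<open>auto simp: less_imp_neq[symmetric]\<close>)
    show "cont_box {u1..u2} {vs..vh} (\<lambda>u v t s. v powr p * (pv \<psi> u v t s)^2 * (rr R u v)^2)"
      unfolding rr_def by (intro cont_boxI continuous_intros) (use vs in auto)
    show "cont_box {u1..u2} {vs..vh} (\<lambda>u v t s. (pu \<psi> u v t s)^2 * (rr R u v)^2)"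
      unfolding rr_def by (intro cont_boxI continuous_intros) auto
    show "continuous_on {vs..vh} w" unfolding w_def by (intro continuous_intros) (use vs in auto)
    show "\<bar>KtildeW R p \<psi> u v t s\<bar> * (rr R u v)^2 * Om2 M e (rr R u v) / 2
        \<le> Ob / rm * (v powr p * (pv \<psi> u v t s)^2 * (rr R u v)^2) + Kd / rm * (w v * ((pu \<psi> u v t s)^2 * (rr R u v)^2))"
      if "u \<in> {u1..u2}" "v \<in> {vs..vh}" for u v t s
      unfolding w_def using that vs p Om_Ob Om_Kd
      by (intro Ktilde_density_split[OF rm(1)]) (auto simp: rr_def rm(2) Om intro: ge_one_powr_ge_zero)
  qed (use u vs Ob0 Kd0 rm(1) sups in \<open>auto simp: w_def\<close>)
  also have "\<dots> \<le> Ob / rm * (\<epsilon> * (SUP ub\<in>{u1..u2}. flux_u M e R W_u (W_v p) \<psi> ub vs vh))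
      + Kd / rm * (vs powr p * exp (-2 * \<beta> * vs) / \<beta> * (SUP vb\<in>{vs..vh}. flux_v M e R W_u (W_v p) \<psi> vb u1 u2))"
    using tail_integral_bound[OF \<beta> p(1) _ p(2)] u vs Ob0 Kd0 rm(1) sups(2,4)
    by (intro add_mono mult_left_mono mult_right_mono) (auto simp: w_def[abs_def])
  finally show ?thesis by (simp only: mult.assoc)
qed

lemma Ktilde_estimate_beyond_gamma:
  assumes RN: "0 < \<bar>e\<bar>" "\<bar>e\<bar> < M" "\<forall>s. rminus M e < R s \<and> R s < rplus M e"
      "\<forall>s. (R has_real_derivative Dfun M e (R s)) (at s)"
      "(R \<longlongrightarrow> rplus M e) at_bot" "(R \<longlongrightarrow> rminus M e) at_top"
    and blue: "rminus M e < r_blue" "r_blue < rplus M e" "0 < \<beta>"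
      "\<forall>\<rho>. rminus M e < \<rho> \<and> \<rho> \<le> r_blue \<longrightarrow> - (1/(2 * \<rho>^2)) * (M - e^2/\<rho>) \<ge> \<beta>"
    and \<gamma>: "2 * \<alpha> < v0" "u_wedge = u_gamma \<alpha> (rstar_of R r_blue) v0" "1 < \<alpha>" "p + 1 < \<alpha> * \<beta>" "0 \<le> p"
    and H: "smooth_fun \<Phi>" "v0 \<le> vs" "vs < vh" "u_wedge \<le> u1" "u1 < u2" "u2 - u1 \<le> \<epsilon>"
  shows "vol_int M e R (\<lambda>u v \<theta> \<phi>. \<bar>KtildeW R p (sph \<Phi>) u v \<theta> \<phi>\<bar>) u1 u2 vs vh
     \<le> Om2 M e r_blue / rminus M e * \<epsilon> * (SUP ub\<in>{u1..u2}. flux_u M e R W_u (W_v p) (sph \<Phi>) ub vs vh)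
       + Om2 M e r_blue * exp (4 * \<beta> * rstar_of R r_blue - 2 * \<beta> * u_wedge) / rminus M e
         * (vs powr p * exp (-2 * \<beta> * vs) / \<beta>)
         * (SUP vb\<in>{vs..vh}. flux_v M e R W_u (W_v p) (sph \<Phi>) vb u1 u2)"
proof (rule Ktilde_estimate[OF smooth_polar_C1[OF H(1)] R_continuous[OF RN(4)]])
  define sb where "sb = rstar_of R r_blue"
  have region: "2 * sb \<le> u + v" if "u1 \<le> u" "vs \<le> v" for u v
    using \<gamma> H that unfolding u_gamma_def sb_def by (smt (verit) ln_gt_zero mult_pos_pos)
  note Om2_bounds = Om2_blueshift_bounds[OF RN(1-4) rstar_of_value[OF RN blue(1,2), folded sb_def]
    blue(4,3)]
  show "0 < rminus M e" "rminus M e \<le> R s" for s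
    using horizons(1)[OF RN(1,2)] RN(3) by (auto intro: less_imp_le)
  show "0 \<le> Om2 M e (R s)" for s using Om2_pos[OF RN(1,2)] RN(3) by (simp add: less_imp_le)
  show "Om2 M e (rr R u v) \<le> Om2 M e r_blue" if "u1 \<le> u" "vs \<le> v" for u v
    using Om2_bounds(1)[OF region[OF that]] .
  show "Om2 M e (rr R u v) \<le> Om2 M e r_blue * exp (4 * \<beta> * rstar_of R r_blue - 2 * \<beta> * u_wedge)
      * exp (-2 * \<beta> * v)" if "u1 \<le> u" "vs \<le> v" for u v
    using Om2_bounds(2)[OF region[OF that]] that H(4) unfolding sb_def by simp
  have "\<alpha> * \<beta> \<le> vs * \<beta>" using \<gamma> H(2) blue(3) by (intro mult_right_mono) auto
  then show "p \<le> \<beta> * vs" using \<gamma> by (simp add: mult.commute)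
qed (use \<gamma> H blue(3) in auto)


text \<open>The theorem holds with delta_1(epsilon) = Omega^2(r_blue) epsilon / r_- and
  delta_2(v_star) = K v_star^p exp(-2 beta v_star) / (beta r_-),
  where K = Omega^2(r_blue) exp(4 beta r^*_blue - 2 beta u_wedge).\<close>
theorem mainTheorem11:
  fixes M e p r_blue \<beta> \<alpha> u_wedge :: real
    and R :: "real \<Rightarrow> real"
  assumes "0 < \<bar>e\<bar>" and "\<bar>e\<bar> < M"
    and "\<forall>s. rminus M e < R s \<and> R s < rplus M e"
    and "\<forall>s. (R has_real_derivative Dfun M e (R s)) (at s)"
    and "(R \<longlongrightarrow> rplus M e) at_bot"
    and "(R \<longlongrightarrow> rminus M e) at_top"
    and "p > 1"
    and "rminus M e < r_blue" and "r_blue < rplus M e"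
    and "\<forall>\<rho>. rminus M e < \<rho> \<and> \<rho> \<le> r_blue \<longrightarrow> M - e^2/\<rho> < 0"
    and "rstar_of R r_blue > 0"
    and "\<beta> > 0"
    and "\<forall>\<rho>. rminus M e < \<rho> \<and> \<rho> \<le> r_blue \<longrightarrow> - (1/(2*\<rho>^2)) * (M - e^2/\<rho>) \<ge> \<beta>"
    and "\<alpha> > max 1 ((p+1)/\<beta>)"
    and "\<alpha> * (2 - ln (2*\<alpha>)) > 2 * rstar_of R r_blue + 1"
    and "u_wedge \<in> u_gamma \<alpha> (rstar_of R r_blue) ` {2*\<alpha><..}"
  shows "\<exists>\<delta>1 \<delta>2 :: real \<Rightarrow> real.
     (\<forall>\<epsilon>>0. \<delta>1 \<epsilon> > 0) \<and>
     (\<forall>vs\<ge>v_gamma \<alpha> (rstar_of R r_blue) u_wedge. \<delta>2 vs > 0) \<and>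
     (\<delta>1 \<longlongrightarrow> 0) (at_right 0) \<and> (\<delta>2 \<longlongrightarrow> 0) at_top \<and>
     (\<forall>\<epsilon> \<Phi> vs vh u1 u2.
        \<epsilon> > 0 \<and> smooth_fun (\<Phi> :: real \<times> real \<times> real \<times> real \<times> real \<Rightarrow> real) \<and>
        vs \<ge> v_gamma \<alpha> (rstar_of R r_blue) u_wedge \<and> vh > vs \<and>
        u_wedge \<le> u1 \<and> u1 < u2 \<and> u2 - u1 \<le> \<epsilon> \<longrightarrow>
        vol_int M e R (\<lambda>u v \<theta> \<phi>. \<bar>KtildeW R p (sph \<Phi>) u v \<theta> \<phi>\<bar>) u1 u2 vs vh
          \<le> \<delta>1 \<epsilon> * (SUP ub\<in>{u1..u2}. flux_u M e R W_u (W_v p) (sph \<Phi>) ub vs vh)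
           + \<delta>2 vs * (SUP vb\<in>{vs..vh}. flux_v M e R W_u (W_v p) (sph \<Phi>) vb u1 u2))"
proof -
  define sb where "sb = rstar_of R r_blue"
  define Kd where "Kd = Om2 M e r_blue * exp (4 * \<beta> * sb - 2 * \<beta> * u_wedge)"
  define \<delta>1 where "\<delta>1 \<epsilon> = Om2 M e r_blue / rminus M e * \<epsilon>" for \<epsilon> :: real
  define \<delta>2 where "\<delta>2 vs = Kd / rminus M e * (vs powr p * exp (-2 * \<beta> * vs) / \<beta>)" for vs :: real
  obtain v0 where v0: "2 * \<alpha> < v0" "u_wedge = u_gamma \<alpha> sb v0" using assms(16) by (auto simp: sb_def)
  have \<alpha>: "1 < \<alpha>" "p + 1 < \<alpha> * \<beta>" using assms(12,14) by (auto simp: field_simps)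
  have v_wedge: "v_gamma \<alpha> sb u_wedge = v0" using v_gamma_u_gamma[of \<alpha> v0 sb] v0 \<alpha> by simp
  have C: "0 < rminus M e" "0 < Om2 M e r_blue"
    using horizons(1)[OF assms(1,2)] Om2_pos[OF assms(1,2,8,9)] by auto
  note estimate = Ktilde_estimate_beyond_gamma[OF assms(1-6,8,9,12,13) v0(1) v0(2)[unfolded sb_def] \<alpha>]
  have "\<forall>\<epsilon>>0. \<delta>1 \<epsilon> > 0" using C by (simp add: \<delta>1_def)
  moreover have "\<forall>vs\<ge>v_gamma \<alpha> (rstar_of R r_blue) u_wedge. \<delta>2 vs > 0"
    using v_wedge v0 \<alpha> C assms(12) by (simp add: \<delta>2_def Kd_def flip: sb_def)
  moreover have "(\<delta>1 \<longlongrightarrow> 0) (at_right 0)" unfolding \<delta>1_def[abs_def] by real_asymp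
  moreover have "(\<delta>2 \<longlongrightarrow> 0) at_top" unfolding \<delta>2_def[abs_def] using assms(12) by real_asymp
  ultimately show ?thesis
    using estimate assms(7) v_wedge
    by (intro exI[of _ \<delta>1] exI[of _ \<delta>2]) (auto simp: \<delta>1_def \<delta>2_def Kd_def sb_def)
qed

end
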